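(* Let $A_1,A_2,B_1,B_2\in\mathcal{M}_n$ be such that $A_1\otimes A_2$ and $B_1\otimes B_2$ belong to the balls of diameter $[m_1I_{n^2},M_1I_{n^2}]$ and $[m_2I_{n^2},M_2I_{n^2}]$ respectively, for some $m_1,M_1,m_2,M_2\in\mathbb C$. Then $$\left|(A_1B_1)\circ(A_2B_2)-(A_1\circ A_2)(B_1\circ B_2)\right|\le\tfrac14|M_1-m_1|\,|M_2-m_2|\,I_n .$$
   Context: $X\otimes Y$ is the Kronecker (tensor) product and $X\circ Y$ the Hadamard (entrywise) product; $|X|=(X^*X)^{1/2}$. $A$ lies in the ball of diameter $[mI,MI]$ iff $\|A-\frac{M+m}{2}I\|\le\frac{|M-m|}{2}$ (operator norm). *)

theory Defs
  imports "HOL-Analysis.Analysis"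
begin

definition cadj :: "complex^'n^'m \<Rightarrow> complex^'m^'n" where
  "cadj A = (\<chi> i j. cnj (A $ j $ i))"

definition kron :: "complex^'n^'m \<Rightarrow> complex^'q^'p \<Rightarrow> complex^('n \<times> 'q)^('m \<times> 'p)" where
  "kron A B = (\<chi> r c. A $ fst r $ fst c * B $ snd r $ snd c)"

definition hadamard :: "complex^'n^'m \<Rightarrow> complex^'n^'m \<Rightarrow> complex^'n^'m" where
  "hadamard A B = (\<chi> i j. A $ i $ j * B $ i $ j)"

definition opnorm :: "complex^'n^'m \<Rightarrow> real" where
  "opnorm A = onorm (\<lambda>x. A *v x)"

definition in_ball_diam :: "complex^'n^'n \<Rightarrow> complex \<Rightarrow> complex \<Rightarrow> bool" where
  "in_ball_diam A m M \<longleftrightarrow> opnorm (A - mat ((M + m) / 2)) \<le> cmod (M - m) / 2"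

definition psd :: "complex^'n^'n \<Rightarrow> bool" where
  "psd P \<longleftrightarrow> cadj P = P \<and> (\<forall>x. 0 \<le> Re (\<Sum>i\<in>UNIV. cnj (x $ i) * (P *v x) $ i))"

definition loewner_le :: "complex^'n^'n \<Rightarrow> complex^'n^'n \<Rightarrow> bool" where
  "loewner_le X Y \<longleftrightarrow> psd (Y - X)"

definition mat_sqrt :: "complex^'n^'n \<Rightarrow> complex^'n^'n" where
  "mat_sqrt P = (THE S. psd S \<and> S ** S = P)"

definition mat_abs :: "complex^'n^'n \<Rightarrow> complex^'n^'n" where
  "mat_abs X = mat_sqrt (cadj X ** X)"

end

theory Submission
  imports Defs
begin

text \<open>
  Let D = (A1 B1) o (A2 B2) - (A1 o A2)(B1 o B2), let c_i = (M_i + m_i)/2 be the centres and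
  r_i = |M_i - m_i|/2 the radii of the two balls, and put A' = A1 (x) A2 - c1 I and
  B' = B1 (x) B2 - c2 I, so that the hypotheses say exactly that the operator norms of A' and B'
  are at most r1 and r2.

  The proof has two independent parts.
  (1) A factorization of D through the tensor space: with J x = (sum of x_i e_i (x) e_i),
      J' the "diagonal extraction" w |-> (w_ii)_i and P the projection killing the diagonal
      entries, one has  D x = J' (A' (P (B' (J x)))).  The scalar shifts c_i I disappear
      because P annihilates the diagonal, on which alone J and J' live.  As J is isometric and
      P, J' are contractions, the norm of D x is at most r1 r2 times the norm of x.
  (2) An operator inequality: if the norm of D x is at most r times that of x for all x, then
      |D| <= r I in the Loewner order.  This uses the spectral theorem for the Hermitian matrix
      D* D (proved below by maximizing the quadratic form on unit spheres of invariant
      subspaces): |D| = sum_u sqrt(lambda_u) u u*, where lambda_u = |D u|^2 <= r^2; identifying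
      this matrix with the THE-defined square root requires uniqueness of psd square roots.
\<close>

definition cinner :: "complex^'n \<Rightarrow> complex^'n \<Rightarrow> complex" where
  "cinner x y = (\<Sum>i\<in>UNIV. cnj (x$i) * y$i)"

lemma psd_cinner: "psd P \<longleftrightarrow> cadj P = P \<and> (\<forall>x. 0 \<le> Re (cinner x (P *v x)))"
  unfolding psd_def cinner_def ..

lemma norm_sq_vec: "(norm (x::complex^'n))^2 = (\<Sum>i\<in>UNIV. (cmod (x$i))^2)"
  unfolding norm_vec_def L2_set_def by (simp add: sum_nonneg)

lemma cinner_self: "cinner x x = of_real ((norm x)^2)"
  unfolding cinner_def norm_sq_vec of_real_sum
  by (intro sum.cong refl) (metis complex_norm_square mult.commute of_real_power)

lemma cinner_cnj: "cnj (cinner x y) = cinner y x"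
  unfolding cinner_def by (simp add: mult.commute)

text \<open>The real part of the inner product is the real inner product of the underlying Euclidean
  space; this transfers linear independence of orthogonal families from the library.\<close>
lemma inner_eq_Re_cinner: "inner x y = Re (cinner x (y::complex^'n))"
  unfolding inner_vec_def cinner_def Re_sum inner_complex_def by simp

lemma cinner_adj: "cinner x (A *v y) = cinner (cadj A *v x) y"
proof -
  have "cinner x (A *v y) = (\<Sum>i\<in>UNIV. \<Sum>j\<in>UNIV. cnj (x$i) * A$i$j * y$j)"
    unfolding cinner_def matrix_vector_mult_def by (simp add: sum_distrib_left mult.assoc)
  also have "\<dots> = (\<Sum>j\<in>UNIV. \<Sum>i\<in>UNIV. cnj (x$i) * A$i$j * y$j)" by (rule sum.swap)
  also have "\<dots> = cinner (cadj A *v x) y"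
    unfolding cinner_def matrix_vector_mult_def cadj_def
    by (simp add: sum_distrib_left sum_distrib_right mult_ac)
  finally show ?thesis .
qed

lemma cinner_add_right: "cinner x (y + z) = cinner x y + cinner x z"
  unfolding cinner_def by (simp add: distrib_left sum.distrib)
lemma cinner_diff_right: "cinner x (y - z) = cinner x y - cinner x z"
  unfolding cinner_def by (simp add: right_diff_distrib sum_subtractf)
lemma cinner_diff_left: "cinner (x - y) z = cinner x z - cinner y z"
  unfolding cinner_def by (simp add: left_diff_distrib sum_subtractf)
lemma cinner_scale_right: "cinner x (c *s y) = c * cinner x y"
  unfolding cinner_def by (simp add: sum_distrib_left mult_ac)
lemma cinner_scale_left: "cinner (c *s x) y = cnj c * cinner x y"
  unfolding cinner_def by (simp add: sum_distrib_left mult_ac)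
lemma cinner_zero_right [simp]: "cinner x 0 = 0"
  unfolding cinner_def by simp
lemma cinner_sum_right: "cinner x (sum f S) = (\<Sum>s\<in>S. cinner x (f s))"
  unfolding cinner_def by (simp add: sum_distrib_left sum_component) (rule sum.swap)

lemma continuous_on_cinner: "continuous_on S (\<lambda>x. cinner u x)"
  unfolding cinner_def by (intro continuous_intros)

lemma continuous_on_quad_form: "continuous_on S (\<lambda>x. Re (cinner x (H *v x)))"
  unfolding cinner_def matrix_vector_mult_def by (simp, intro continuous_intros)

lemma mat_eqI:
  fixes A B :: "complex^'n^'m"
  assumes "\<And>x. A *v x = B *v x"
  shows "A = B"
proof -
  have "A $ i $ j = B $ i $ j" for i j
  proof -
    have "(A *v axis j 1) $ i = (B *v axis j 1) $ i" using assms by simp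
    thus ?thesis unfolding matrix_vector_mult_def axis_def
      by (simp add: if_distrib cong: if_cong)
  qed
  thus ?thesis by (simp add: vec_eq_iff)
qed

lemma mv_scale: "A *v (c *s x) = c *s (A *v (x::complex^'n))"
  by (simp add: vec_eq_iff matrix_vector_mult_def sum_distrib_left mult_ac)
lemma mv_diff: "A *v (x - y) = A *v x - A *v (y::complex^'n)"
  by (simp add: vec_eq_iff matrix_vector_mult_def sum_subtractf right_diff_distrib)
lemma mv_sum: "A *v (sum f S) = (\<Sum>s\<in>S. A *v (f s::complex^'n))"
  unfolding vec_eq_iff
  by (auto simp: matrix_vector_mult_def sum_distrib_left sum_component intro!: sum.swap)
lemma diff_mv: "(A - B) *v x = A *v x - B *v (x::complex^'n)"
  by (simp add: vec_eq_iff matrix_vector_mult_def sum_subtractf left_diff_distrib)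
lemma mat_mv: "mat c *v x = c *s (x::complex^'n)"
proof -
  have "\<And>i j. (if i = j then c else 0) * x $ j = (if j = i then c * x $ i else 0)" by auto
  thus ?thesis by (simp add: vec_eq_iff matrix_vector_mult_def mat_def)
qed

lemma of_real_scale: "of_real r *s x = r *\<^sub>R (x::complex^'n)"
  by (simp add: vec_eq_iff) (simp add: scaleR_conv_of_real)

lemma cadj_diff: "cadj (A - B) = cadj A - cadj B"
  by (simp add: vec_eq_iff cadj_def)
lemma cadj_mat: "cadj (mat c :: complex^'n^'n) = mat (cnj c)"
  by (simp add: vec_eq_iff cadj_def mat_def)
lemma cadj_mult: "cadj (A ** B) = cadj B ** (cadj A :: complex^'n^'m)"
  by (simp add: vec_eq_iff cadj_def matrix_matrix_mult_def mult.commute)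
lemma cadj_cadj [simp]: "cadj (cadj A) = A"
  unfolding cadj_def by (simp add: vec_eq_iff)

text \<open>A real quadratic a - 2ts + t^2 b that is nonnegative everywhere, with a <= 0 and s >= 0,
  must have s = 0 (otherwise it is negative for small t > 0).\<close>
lemma real_quadratic_nonneg:
  fixes a s b :: real
  assumes "\<And>t. 0 \<le> a - 2 * t * s + t^2 * b" "a \<le> 0" "0 \<le> s"
  shows "s = 0"
proof (rule ccontr)
  assume "s \<noteq> 0" hence sp: "s > 0" using assms(3) by simp
  define t where "t = s / (\<bar>b\<bar> + 1)"
  have tp: "t > 0" unfolding t_def using sp by (simp add: add_pos_nonneg)
  have "t^2 * b \<le> t^2 * (\<bar>b\<bar> + 1)" using tp by (intro mult_left_mono) auto
  also have "\<dots> = t * (t * (\<bar>b\<bar> + 1))" by (simp add: power2_eq_square)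
  also have "t * (\<bar>b\<bar> + 1) = s" unfolding t_def
    by (metis add_nonneg_pos abs_ge_zero zero_less_one less_irrefl nonzero_eq_divide_eq)
  finally have "a - 2 * t * s + t^2 * b \<le> - (t * s)" using assms(2) by linarith
  moreover have "t * s > 0" using tp sp by simp
  ultimately show False using assms(1)[of t] by linarith
qed

text \<open>If the Hermitian form of Q is nonnegative along the line v - t Q v and nonpositive at v,
  then Q v = 0: along that line the form is a real quadratic in t with linear coefficient
  -2 |Q v|^2.  Used both for psd matrices and for forms nonnegative only on a subspace.\<close>
lemma hermitian_form_vanishing:
  assumes herm: "cadj Q = Q"
    and nonneg: "\<And>t::real. 0 \<le> Re (cinner (v - of_real t *s (Q *v v))
                                         (Q *v (v - of_real t *s (Q *v v))))"
    and nonpos: "Re (cinner v (Q *v v)) \<le> 0"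
  shows "Q *v v = 0"
proof -
  define w where "w = Q *v v"
  have vQw: "cinner v (Q *v w) = cinner w w" using cinner_adj[of v Q w] herm w_def by simp
  have "Re (cinner (v - of_real t *s w) (Q *v (v - of_real t *s w)))
        = Re (cinner v (Q *v v)) - 2 * t * (norm w)^2 + t^2 * Re (cinner w (Q *v w))" for t
    unfolding mv_diff mv_scale cinner_diff_left cinner_diff_right cinner_scale_left
      cinner_scale_right vQw w_def[symmetric]
    by (simp add: cinner_self power2_eq_square algebra_simps)
  hence "\<And>t. 0 \<le> Re (cinner v (Q *v v)) - 2 * t * (norm w)^2 + t^2 * Re (cinner w (Q *v w))"
    using nonneg unfolding w_def by metis
  from real_quadratic_nonneg[OF this nonpos] have "norm w = 0" by simp
  thus ?thesis unfolding w_def by simp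
qed

section \<open>The spectral theorem for Hermitian matrices\<close>

definition orthonormal_eigensystem :: "complex^'n^'n \<Rightarrow> (complex^'n) set \<Rightarrow> bool" where
  "orthonormal_eigensystem H B \<longleftrightarrow> finite B
     \<and> (\<forall>u\<in>B. norm u = 1 \<and> (\<exists>l::real. H *v u = of_real l *s u))
     \<and> (\<forall>u\<in>B. \<forall>v\<in>B. u \<noteq> v \<longrightarrow> cinner u v = 0)"

text \<open>Orthonormal families are independent, so their size is bounded by the dimension; this
  makes a family of maximal size exist.\<close>
lemma orthonormal_eigensystem_card:
  fixes B :: "(complex^'n) set"
  assumes "orthonormal_eigensystem H B"
  shows "card B < DIM(complex^'n) + 1"
proof -
  have "pairwise orthogonal B"
    using assms unfolding orthonormal_eigensystem_def pairwise_def orthogonal_def inner_eq_Re_cinner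
    by auto
  moreover have "0 \<notin> B" using assms unfolding orthonormal_eigensystem_def by force
  ultimately have "independent B" by (rule pairwise_orthogonal_independent)
  from independent_bound[OF this] show ?thesis by simp
qed

lemma orthonormal_sum_delta:
  assumes "orthonormal_eigensystem H B" "w \<in> B"
  shows "(\<Sum>u\<in>B. c u * cinner w u) = c w"
proof -
  have fin: "finite B" using assms unfolding orthonormal_eigensystem_def by auto
  have "(\<Sum>u\<in>B. c u * cinner w u) = c w * cinner w w + (\<Sum>u\<in>B-{w}. c u * cinner w u)"
    using sum.remove[OF fin assms(2)] by simp
  also have "(\<Sum>u\<in>B-{w}. c u * cinner w u) = 0"
    using assms unfolding orthonormal_eigensystem_def by (intro sum.neutral) auto
  also have "cinner w w = 1"
    using assms unfolding orthonormal_eigensystem_def by (simp add: cinner_self)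
  finally show ?thesis by simp
qed

lemma quad_form_scale:
  "Re (cinner (of_real c *s x) (H *v (of_real c *s x))) = c^2 * Re (cinner x (H *v x))"
  by (simp add: mv_scale cinner_scale_left cinner_scale_right power2_eq_square mult.assoc)

text \<open>A nonzero closed H-invariant subspace contains a unit eigenvector of the Hermitian matrix H
  with real eigenvalue: a maximizer v of the quadratic form on the unit sphere of W makes the
  form of l I - H (l the maximum) nonnegative on W and zero at v.\<close>
lemma invariant_subspace_eigenvector:
  fixes H :: "complex^'n^'n"
  assumes herm: "cadj H = H" and closed: "closed W"
    and W_scale: "\<And>c x. x \<in> W \<Longrightarrow> c *s x \<in> W"
    and W_diff: "\<And>x y. x \<in> W \<Longrightarrow> y \<in> W \<Longrightarrow> x - y \<in> W"
    and W_inv: "\<And>x. x \<in> W \<Longrightarrow> H *v x \<in> W"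
    and x0: "x0 \<in> W" "x0 \<noteq> 0"
  obtains v and l :: real where "v \<in> W" "norm v = 1" "H *v v = of_real l *s v"
proof -
  have normalize: "of_real (1 / norm x) *s x \<in> W \<inter> sphere 0 1" if "x \<in> W" "x \<noteq> 0" for x
  proof -
    have "norm (of_real (1 / norm x) *s x) = 1" unfolding of_real_scale using that by simp
    thus ?thesis using W_scale that by simp
  qed
  have "compact (W \<inter> sphere 0 1)" using closed by (intro closed_Int_compact compact_sphere)
  moreover have "W \<inter> sphere 0 1 \<noteq> {}" using normalize[OF x0] by auto
  ultimately obtain v where v: "v \<in> W \<inter> sphere 0 1"
    and vmax: "\<forall>x\<in>W \<inter> sphere 0 1. Re (cinner x (H *v x)) \<le> Re (cinner v (H *v v))"
    using continuous_attains_sup[OF _ _ continuous_on_quad_form] by blast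
  define l where "l = Re (cinner v (H *v v))"
  define Q where "Q = mat (of_real l) - H"
  have Qx: "Q *v x = of_real l *s x - H *v x" for x unfolding Q_def diff_mv mat_mv ..
  have Q_nonneg: "0 \<le> Re (cinner x (Q *v x))" if x: "x \<in> W" for x
  proof (cases "x = 0")
    case False
    have "(1 / norm x)^2 * Re (cinner x (H *v x)) \<le> l"
      using bspec[OF vmax normalize[OF x False]] unfolding l_def quad_form_scale .
    hence "Re (cinner x (H *v x)) \<le> (norm x)^2 * l" using False
      by (simp add: power2_eq_square field_simps)
    thus ?thesis unfolding Qx cinner_diff_right cinner_scale_right
      by (simp add: cinner_self mult.commute)
  qed simp
  have "cadj Q = Q" unfolding Q_def cadj_diff cadj_mat herm by simp
  moreover have "Re (cinner v (Q *v v)) \<le> 0" using v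
    unfolding Qx cinner_diff_right cinner_scale_right l_def by (simp add: cinner_self)
  moreover have "Q *v v \<in> W" unfolding Qx using v W_scale W_inv W_diff by auto
  ultimately have "Q *v v = 0" using v by (intro hermitian_form_vanishing Q_nonneg W_diff W_scale) auto
  hence "H *v v = of_real l *s v" unfolding Qx by simp
  with v show ?thesis using that by auto
qed

text \<open>Existence of an orthonormal eigenbasis: a maximal orthonormal eigensystem spans, since
  its orthogonal complement is H-invariant and would otherwise contain a further eigenvector.\<close>
lemma orthonormal_eigenbasis_exists:
  fixes H :: "complex^'n^'n"
  assumes herm: "cadj H = H"
  shows "\<exists>B. orthonormal_eigensystem H B \<and> (\<forall>x. x = (\<Sum>u\<in>B. cinner u x *s u))"
proof -
  have "orthonormal_eigensystem H {}" by (simp add: orthonormal_eigensystem_def)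
  then obtain B where B: "orthonormal_eigensystem H B"
    and maximal: "\<forall>B'. orthonormal_eigensystem H B' \<longrightarrow> card B' \<le> card B"
    using ex_has_greatest_nat[of "orthonormal_eigensystem H" "{}" card "DIM(complex^'n) + 1"]
      orthonormal_eigensystem_card by blast
  define W where "W = {x. \<forall>u\<in>B. cinner u x = 0}"
  have complement_trivial: "W \<subseteq> {0}"
  proof (rule ccontr)
    assume "\<not> W \<subseteq> {0}" then obtain x0 where x0: "x0 \<in> W" "x0 \<noteq> 0" by auto
    have W_inv: "H *v x \<in> W" if "x \<in> W" for x
    proof -
      have "cinner u (H *v x) = 0" if u: "u \<in> B" for u
      proof -
        obtain l :: real where "H *v u = of_real l *s u"
          using B u unfolding orthonormal_eigensystem_def by blast
        thus ?thesis using cinner_adj[of u H x] herm u \<open>x \<in> W\<close>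
          by (simp add: cinner_scale_left W_def)
      qed
      thus ?thesis by (simp add: W_def)
    qed
    have "W = (\<Inter>u\<in>B. {x. cinner u x = 0})" unfolding W_def by auto
    hence "closed W"
      by (auto intro!: closed_INT closed_Collect_eq continuous_on_cinner continuous_on_const)
    then obtain v and l :: real where v: "v \<in> W" "norm v = 1" "H *v v = of_real l *s v"
      using invariant_subspace_eigenvector[OF herm _ _ _ W_inv x0]
      by (auto simp: W_def cinner_scale_right cinner_diff_right)
    have "v \<notin> B" using v by (auto simp: W_def cinner_self)
    moreover have "orthonormal_eigensystem H (insert v B)"
      using B v unfolding orthonormal_eigensystem_def W_def
      by (auto, metis cinner_cnj complex_cnj_zero)
    ultimately have "card (insert v B) \<le> card B" using maximal by blast
    moreover have "finite B" using B unfolding orthonormal_eigensystem_def by simp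
    ultimately show False using \<open>v \<notin> B\<close> by simp
  qed
  have "x = (\<Sum>u\<in>B. cinner u x *s u)" for x
  proof -
    have "x - (\<Sum>u\<in>B. cinner u x *s u) \<in> W" unfolding W_def
      by (auto simp: cinner_diff_right cinner_sum_right cinner_scale_right
          orthonormal_sum_delta[OF B])
    hence "x - (\<Sum>u\<in>B. cinner u x *s u) = 0" using complement_trivial by blast
    thus ?thesis by simp
  qed
  thus ?thesis using B by blast
qed

text \<open>The matrix with eigenvectors B and real eigenvalues g, i.e. the sum of g u * u u*.\<close>
definition spectral_mat :: "(complex^'n) set \<Rightarrow> (complex^'n \<Rightarrow> real) \<Rightarrow> complex^'n^'n" where
  "spectral_mat B g = (\<chi> i j. \<Sum>u\<in>B. of_real (g u) * u$i * cnj (u$j))"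

lemma spectral_mat_mv: "spectral_mat B g *v x = (\<Sum>u\<in>B. (of_real (g u) * cinner u x) *s u)"
proof -
  have "(spectral_mat B g *v x) $ i = (\<Sum>u\<in>B. (of_real (g u) * cinner u x) * u $ i)" for i
  proof -
    have "(spectral_mat B g *v x) $ i
        = (\<Sum>j\<in>UNIV. \<Sum>u\<in>B. of_real (g u) * u$i * cnj (u$j) * x$j)"
      unfolding spectral_mat_def matrix_vector_mult_def by (simp add: sum_distrib_right)
    also have "\<dots> = (\<Sum>u\<in>B. \<Sum>j\<in>UNIV. of_real (g u) * u$i * cnj (u$j) * x$j)"
      by (rule sum.swap)
    also have "\<dots> = (\<Sum>u\<in>B. (of_real (g u) * cinner u x) * u $ i)"
      unfolding cinner_def by (simp add: sum_distrib_left sum_distrib_right mult_ac)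
    finally show ?thesis .
  qed
  thus ?thesis by (simp add: vec_eq_iff sum_component)
qed

lemma spectral_mat_quad_form:
  "Re (cinner x (spectral_mat B g *v x)) = (\<Sum>u\<in>B. g u * (cmod (cinner u x))^2)"
proof -
  have "cinner x (spectral_mat B g *v x) = (\<Sum>u\<in>B. of_real (g u * (cmod (cinner u x))^2))"
    unfolding spectral_mat_mv cinner_sum_right cinner_scale_right
  proof (rule sum.cong[OF refl])
    fix u
    have "of_real (g u) * cinner u x * cinner x u
        = of_real (g u) * (cinner u x * cnj (cinner u x))"
      by (simp add: cinner_cnj mult.assoc)
    also have "\<dots> = of_real (g u * (cmod (cinner u x))^2)"
      by (simp only: complex_norm_square of_real_mult)
    finally show "of_real (g u) * cinner u x * cinner x u
        = of_real (g u * (cmod (cinner u x))^2)" .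
  qed
  thus ?thesis by (simp only: Re_sum Re_complex_of_real)
qed

lemma spectral_mat_psd:
  assumes "\<And>u. u \<in> B \<Longrightarrow> 0 \<le> g u"
  shows "psd (spectral_mat B g)"
proof -
  have "cadj (spectral_mat B g) = spectral_mat B g"
    unfolding spectral_mat_def cadj_def by (simp add: vec_eq_iff mult_ac)
  thus ?thesis unfolding psd_cinner spectral_mat_quad_form
    using assms by (auto intro!: sum_nonneg)
qed

lemma spectral_mat_cong:
  assumes "\<And>u. u \<in> B \<Longrightarrow> g u = h u"
  shows "spectral_mat B g = spectral_mat B h"
  unfolding spectral_mat_def using assms by (simp add: vec_eq_iff)

lemma spectral_mat_mult:
  assumes "orthonormal_eigensystem H B"
  shows "spectral_mat B g ** spectral_mat B h = spectral_mat B (\<lambda>u. g u * h u)"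
proof (rule mat_eqI)
  fix x
  have "spectral_mat B g ** spectral_mat B h *v x = spectral_mat B g *v (spectral_mat B h *v x)"
    by (simp add: matrix_vector_mul_assoc)
  also have "\<dots> = spectral_mat B (\<lambda>u. g u * h u) *v x"
    unfolding spectral_mat_mv cinner_sum_right cinner_scale_right
  proof (intro sum.cong refl)
    fix u assume u: "u \<in> B"
    have "(\<Sum>s\<in>B. (of_real (h s) * cinner s x) * cinner u s) = of_real (h u) * cinner u x"
      by (rule orthonormal_sum_delta[OF assms u])
    thus "(of_real (g u) * (\<Sum>s\<in>B. of_real (h s) * cinner s x * cinner u s)) *s u =
          (of_real (g u * h u) * cinner u x) *s u" by (simp add: mult_ac)
  qed
  finally show "spectral_mat B g ** spectral_mat B h *v x
      = spectral_mat B (\<lambda>u. g u * h u) *v x" .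
qed

lemma scalar_minus_spectral_mat:
  assumes "\<forall>x. x = (\<Sum>u\<in>B. cinner u x *s u)"
  shows "mat (of_real r) - spectral_mat B g = spectral_mat B (\<lambda>u. r - g u)"
proof (rule mat_eqI)
  fix x
  have "mat (of_real r) *v x = of_real r *s (\<Sum>u\<in>B. cinner u x *s u)"
    unfolding mat_mv using assms[rule_format, of x] by simp
  also have "\<dots> = (\<Sum>u\<in>B. (of_real r * cinner u x) *s u)"
    by (simp add: vec_eq_iff sum_distrib_left sum_component mult_ac)
  finally show "(mat (of_real r) - spectral_mat B g) *v x = spectral_mat B (\<lambda>u. r - g u) *v x"
    unfolding diff_mv spectral_mat_mv
    by (simp add: vec_eq_iff sum_component sum_subtractf[symmetric] algebra_simps)
qed

lemma spectral_decomposition: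
  fixes H :: "complex^'n^'n"
  assumes herm: "cadj H = H"
  obtains B where "orthonormal_eigensystem H B" "\<forall>x. x = (\<Sum>u\<in>B. cinner u x *s u)"
    "\<And>u. u \<in> B \<Longrightarrow> H *v u = of_real (Re (cinner u (H *v u))) *s u"
    "H = spectral_mat B (\<lambda>u. Re (cinner u (H *v u)))"
proof -
  obtain B where B: "orthonormal_eigensystem H B" and span: "\<forall>x. x = (\<Sum>u\<in>B. cinner u x *s u)"
    using orthonormal_eigenbasis_exists[OF herm] by blast
  define ev where "ev u = Re (cinner u (H *v u))" for u
  have eigen: "H *v u = of_real (ev u) *s u" if u: "u \<in> B" for u
  proof -
    obtain l :: real where l: "H *v u = of_real l *s u" and n: "norm u = 1"
      using B u unfolding orthonormal_eigensystem_def by blast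
    have "ev u = l" unfolding ev_def l cinner_scale_right by (simp add: cinner_self n)
    thus ?thesis using l by simp
  qed
  have "H = spectral_mat B ev"
  proof (rule mat_eqI)
    fix x
    have "H *v x = H *v (\<Sum>u\<in>B. cinner u x *s u)" using span by metis
    also have "\<dots> = (\<Sum>u\<in>B. cinner u x *s (H *v u))" by (simp add: mv_sum mv_scale)
    also have "\<dots> = spectral_mat B ev *v x" unfolding spectral_mat_mv
      by (intro sum.cong refl) (simp add: eigen vector_smult_assoc mult.commute)
    finally show "H *v x = spectral_mat B ev *v x" .
  qed
  thus ?thesis using that B span eigen unfolding ev_def by blast
qed

section \<open>Uniqueness of positive semidefinite square roots\<close>

text \<open>If S, T are psd with S^2 = T^2 and (S - T) v = l v with l nonzero, then v = 0:
  S (S - T) v + (S - T) T v = S^2 v - T^2 v = 0; pairing with v gives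
  l (<v, S v> + <v, T v>) = 0, so both forms vanish at v, whence S v = T v = 0.\<close>
lemma psd_square_eq_eigenvector:
  fixes S T :: "complex^'n^'n"
  assumes S: "psd S" and T: "psd T" and eq: "S ** S = T ** T"
    and eigen: "(S - T) *v v = of_real l *s v" and l: "l \<noteq> 0"
  shows "v = 0"
proof -
  have hS: "cadj S = S" and nS: "\<And>x. 0 \<le> Re (cinner x (S *v x))" using S unfolding psd_cinner by auto
  have hT: "cadj T = T" and nT: "\<And>x. 0 \<le> Re (cinner x (T *v x))" using T unfolding psd_cinner by auto
  have hX: "cadj (S - T) = S - T" unfolding cadj_diff hS hT ..
  have "S *v ((S - T) *v v) + (S - T) *v (T *v v) = (S ** S) *v v - (T ** T) *v v"
    unfolding diff_mv mv_diff by (simp add: matrix_vector_mul_assoc)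
  hence "S *v ((S - T) *v v) + (S - T) *v (T *v v) = 0" using eq by simp
  hence "cinner v (S *v ((S - T) *v v)) + cinner v ((S - T) *v (T *v v)) = 0"
    by (metis cinner_add_right cinner_zero_right)
  moreover have "cinner v (S *v ((S - T) *v v)) = of_real l * cinner v (S *v v)"
    unfolding eigen mv_scale cinner_scale_right ..
  moreover have "cinner v ((S - T) *v (T *v v)) = of_real l * cinner v (T *v v)"
    unfolding cinner_adj[of v "S - T"] hX eigen cinner_scale_left by simp
  ultimately have "of_real l * (cinner v (S *v v) + cinner v (T *v v)) = 0"
    by (simp add: distrib_left)
  hence "cinner v (S *v v) + cinner v (T *v v) = 0" using l by simp
  hence "Re (cinner v (S *v v)) + Re (cinner v (T *v v)) = 0"
    by (metis plus_complex.sel(1) zero_complex.sel(1))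
  hence "Re (cinner v (S *v v)) \<le> 0" "Re (cinner v (T *v v)) \<le> 0"
    using nS[of v] nT[of v] by linarith+
  hence "S *v v = 0" "T *v v = 0"
    using hermitian_form_vanishing[OF hS nS] hermitian_form_vanishing[OF hT nT] by blast+
  hence "of_real l *s v = 0" using eigen by (simp add: diff_mv)
  thus ?thesis using l by (simp add: vec_eq_iff)
qed

text \<open>Two psd square roots of the same matrix coincide: every eigenvalue of S - T is zero.\<close>
lemma psd_sqrt_unique:
  fixes S T :: "complex^'n^'n"
  assumes S: "psd S" and T: "psd T" and eq: "S ** S = T ** T"
  shows "S = T"
proof -
  have "cadj (S - T) = S - T" using S T unfolding psd_cinner cadj_diff by simp
  then obtain B where B: "orthonormal_eigensystem (S - T) B"
    and eigen: "\<And>u. u \<in> B \<Longrightarrow> (S - T) *v u = of_real (Re (cinner u ((S - T) *v u))) *s u"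
    and decomp: "S - T = spectral_mat B (\<lambda>u. Re (cinner u ((S - T) *v u)))"
    by (rule spectral_decomposition) blast
  have "Re (cinner u ((S - T) *v u)) = 0" if u: "u \<in> B" for u
  proof (rule ccontr)
    assume "Re (cinner u ((S - T) *v u)) \<noteq> 0"
    hence "u = 0" by (rule psd_square_eq_eigenvector[OF S T eq eigen[OF u]])
    thus False using B u unfolding orthonormal_eigensystem_def by auto
  qed
  hence "spectral_mat B (\<lambda>u. Re (cinner u ((S - T) *v u))) = spectral_mat B (\<lambda>u. 0)"
    by (rule spectral_mat_cong)
  with decomp have "S - T = spectral_mat B (\<lambda>u. 0)" by (rule trans)
  also have "\<dots> = 0" by (simp add: spectral_mat_def vec_eq_iff)
  finally show ?thesis by simp
qed

lemma mat_sqrt_eqI: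
  assumes "psd S" "S ** S = P"
  shows "mat_sqrt P = S"
  unfolding mat_sqrt_def
proof (rule the_equality)
  fix T assume "psd T \<and> T ** T = P"
  thus "T = S" using psd_sqrt_unique[of T S] assms by simp
qed (use assms in simp)

section \<open>Norm bounds give Loewner bounds on the modulus\<close>

text \<open>If D stretches no vector by more than r, then |D| <= r I.  In an eigenbasis of D* D the
  eigenvalue at u is |D u|^2 <= r^2, and |D| has eigenvalues sqrt |D u|^2 <= r.\<close>
lemma mat_abs_le_of_norm_bound:
  fixes D :: "complex^'n^'n"
  assumes bound: "\<And>x. norm (D *v x) \<le> r * norm x" and r: "0 \<le> r"
  shows "loewner_le (mat_abs D) (mat (of_real r))"
proof -
  define Q where "Q = cadj D ** D"
  have "cadj Q = Q" unfolding Q_def cadj_mult by simp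
  then obtain B where B: "orthonormal_eigensystem Q B"
    and span: "\<forall>x. x = (\<Sum>u\<in>B. cinner u x *s u)"
    and decomp: "Q = spectral_mat B (\<lambda>u. Re (cinner u (Q *v u)))"
    by (rule spectral_decomposition) blast
  define ev where "ev = (\<lambda>u. Re (cinner u (Q *v u)))"
  have ev: "ev u = (norm (D *v u))^2" for u
  proof -
    have "cinner u (Q *v u) = cinner (D *v u) (D *v u)"
      unfolding Q_def matrix_vector_mul_assoc[symmetric] cinner_adj[of u "cadj D"] by simp
    thus ?thesis unfolding ev_def by (simp add: cinner_self)
  qed
  have ev_le: "sqrt (ev u) \<le> r" if "u \<in> B" for u
  proof -
    have "norm u = 1" using B that unfolding orthonormal_eigensystem_def by auto
    thus ?thesis using bound[of u] r unfolding ev by simp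
  qed
  define S where "S = spectral_mat B (\<lambda>u. sqrt (ev u))"
  have "S ** S = spectral_mat B (\<lambda>u. sqrt (ev u) * sqrt (ev u))"
    unfolding S_def spectral_mat_mult[OF B] ..
  also have "\<dots> = spectral_mat B ev" by (rule spectral_mat_cong) (simp add: ev power2_eq_square)
  also have "\<dots> = Q" unfolding ev_def using decomp by (rule sym)
  finally have "S ** S = Q" .
  moreover have "psd S" unfolding S_def by (rule spectral_mat_psd) (simp add: ev)
  ultimately have "mat_abs D = S" unfolding mat_abs_def Q_def[symmetric] by (intro mat_sqrt_eqI)
  moreover have "psd (mat (of_real r) - S)" unfolding S_def scalar_minus_spectral_mat[OF span]
    by (rule spectral_mat_psd) (simp add: ev_le)
  ultimately show ?thesis unfolding loewner_le_def by simp
qed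

section \<open>Factorizing the Hadamard-product defect through the tensor space\<close>

lemma sum_pair: "(\<Sum>p\<in>(UNIV::('a::finite\<times>'b::finite) set). f p) = (\<Sum>k\<in>UNIV. \<Sum>l\<in>UNIV. f (k,l))"
  unfolding sum.cartesian_product UNIV_Times_UNIV by simp

lemma sum_delta_mult: "(\<Sum>j'\<in>(UNIV::'a::finite set). f j' * (if j = j' then y else 0)) = f j * (y::complex)"
proof -
  have "(\<Sum>j'\<in>(UNIV::'a set). f j' * (if j = j' then y else 0))
      = (\<Sum>j'\<in>UNIV. if j = j' then f j' * y else 0)"
    by (intro sum.cong) auto
  thus ?thesis by simp
qed

lemma sum_offdiag: "(\<Sum>l\<in>(UNIV::'a::finite set). if k = l then 0 else f l) = (\<Sum>l\<in>UNIV. f l) - (f k :: complex)"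
proof -
  have "(\<Sum>l\<in>(UNIV::'a set). f l) = (\<Sum>l\<in>UNIV. (if k = l then f l else 0) + (if k = l then 0 else f l))"
    by (intro sum.cong) auto
  also have "\<dots> = f k + (\<Sum>l\<in>UNIV. if k = l then 0 else f l)" by (simp add: sum.distrib)
  finally show ?thesis by simp
qed

definition diag_embed :: "complex^('n::finite) \<Rightarrow> complex^('n\<times>'n)" where
  "diag_embed x = (\<chi> p. if fst p = snd p then x $ fst p else 0)"
definition offdiag_part :: "complex^('n::finite\<times>'n) \<Rightarrow> complex^('n\<times>'n)" where
  "offdiag_part z = (\<chi> p. if fst p = snd p then 0 else z $ p)"
definition diag_extract :: "complex^('n::finite\<times>'n) \<Rightarrow> complex^'n" where
  "diag_extract w = (\<chi> i. w $ (i,i))"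

lemma norm_diag_embed: "norm (diag_embed x) = norm x"
proof -
  have row: "(\<Sum>l\<in>UNIV. (cmod ((diag_embed x) $ (k,l)))^2) = (cmod (x$k))^2" for k
  proof -
    have "(\<Sum>l\<in>UNIV. (cmod ((diag_embed x) $ (k,l)))^2)
        = (\<Sum>l\<in>UNIV. if k = l then (cmod (x$k))^2 else 0)"
      unfolding diag_embed_def by (intro sum.cong) auto
    thus ?thesis by simp
  qed
  have "(norm (diag_embed x))^2 = (norm x)^2"
    unfolding norm_sq_vec sum_pair row ..
  thus ?thesis by (rule power2_eq_imp_eq) auto
qed

lemma norm_offdiag_part: "norm (offdiag_part z) \<le> norm z"
proof -
  have "(norm (offdiag_part z))^2 \<le> (norm z)^2"
    unfolding norm_sq_vec offdiag_part_def by (intro sum_mono) auto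
  thus ?thesis by (rule power2_le_imp_le) auto
qed

lemma norm_diag_extract: "norm (diag_extract w) \<le> norm w"
proof -
  have "(norm (diag_extract w))^2
      = (\<Sum>k\<in>UNIV. \<Sum>l\<in>UNIV. if k = l then (cmod (w $ (k,l)))^2 else 0)"
    unfolding norm_sq_vec diag_extract_def by simp
  also have "\<dots> \<le> (\<Sum>k\<in>UNIV. \<Sum>l\<in>UNIV. (cmod (w $ (k,l)))^2)"
    by (intro sum_mono) auto
  also have "\<dots> = (norm w)^2" unfolding norm_sq_vec sum_pair ..
  finally show ?thesis by (rule power2_le_imp_le) auto
qed

text \<open>Entrywise, the defect is the off-diagonal part of the double sum defining (A1 B1) o (A2 B2):
  the diagonal terms k = l are exactly (A1 o A2)(B1 o B2).\<close>
lemma hadamard_defect_entry: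
  fixes A1 A2 B1 B2 :: "complex^'n^'n"
  shows "(hadamard (A1 ** B1) (A2 ** B2) - hadamard A1 A2 ** hadamard B1 B2) $ i $ j
    = (\<Sum>k\<in>UNIV. \<Sum>l\<in>UNIV. if k = l then 0 else A1$i$k * A2$i$l * B1$k$j * B2$l$j)"
proof -
  have "(\<Sum>k\<in>UNIV. \<Sum>l\<in>UNIV. if k = l then 0 else A1$i$k * A2$i$l * B1$k$j * B2$l$j)
     = (\<Sum>k\<in>UNIV. (\<Sum>l\<in>UNIV. A1$i$k * A2$i$l * B1$k$j * B2$l$j) - A1$i$k * A2$i$k * B1$k$j * B2$k$j)"
    by (intro sum.cong refl sum_offdiag)
  also have "\<dots> = (\<Sum>k\<in>UNIV. \<Sum>l\<in>UNIV. A1$i$k * A2$i$l * B1$k$j * B2$l$j)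
      - (\<Sum>k\<in>UNIV. A1$i$k * A2$i$k * B1$k$j * B2$k$j)" by (simp add: sum_subtractf)
  also have "\<dots> = (hadamard (A1 ** B1) (A2 ** B2) - hadamard A1 A2 ** hadamard B1 B2) $ i $ j"
    unfolding hadamard_def matrix_matrix_mult_def
    by (simp add: sum_product mult_ac)
  finally show ?thesis by simp
qed

lemma hadamard_defect_mv:
  fixes A1 A2 B1 B2 :: "complex^'n^'n"
  shows "((hadamard (A1 ** B1) (A2 ** B2) - hadamard A1 A2 ** hadamard B1 B2) *v x) $ i
     = (\<Sum>k\<in>UNIV. \<Sum>l\<in>UNIV. if k = l then 0 else A1$i$k * A2$i$l * (\<Sum>j\<in>UNIV. B1$k$j * B2$l$j * x$j))"
proof -
  have "((hadamard (A1 ** B1) (A2 ** B2) - hadamard A1 A2 ** hadamard B1 B2) *v x) $ i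
    = (\<Sum>j\<in>UNIV. \<Sum>k\<in>UNIV. \<Sum>l\<in>UNIV. if k = l then 0 else A1$i$k * A2$i$l * B1$k$j * B2$l$j * x$j)"
    unfolding matrix_vector_mult_def[of "_ - _"] hadamard_defect_entry
    by (simp add: sum_distrib_right if_distrib[of "\<lambda>a. a * _"] cong: if_cong)
  also have "\<dots> = (\<Sum>k\<in>UNIV. \<Sum>l\<in>UNIV. \<Sum>j\<in>UNIV. if k = l then 0 else A1$i$k * A2$i$l * B1$k$j * B2$l$j * x$j)"
    by (subst sum.swap) (intro sum.cong refl sum.swap)
  also have "\<dots> = (\<Sum>k\<in>UNIV. \<Sum>l\<in>UNIV. if k = l then 0 else A1$i$k * A2$i$l * (\<Sum>j\<in>UNIV. B1$k$j * B2$l$j * x$j))"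
    by (intro sum.cong refl) (simp add: sum_distrib_left mult_ac)
  finally show ?thesis .
qed

lemma hadamard_defect_factorization:
  fixes A1 A2 B1 B2 :: "complex^'n^'n" and a b :: complex
  shows "(hadamard (A1 ** B1) (A2 ** B2) - hadamard A1 A2 ** hadamard B1 B2) *v x
    = diag_extract ((kron A1 A2 - mat a) *v
                      offdiag_part ((kron B1 B2 - mat b) *v diag_embed x))"
proof -
  define w where "w = (kron B1 B2 - mat b) *v diag_embed x"
  have w: "w $ (k,l) = (\<Sum>j\<in>UNIV. B1$k$j * B2$l$j * x$j)" if kl: "k \<noteq> l" for k l
  proof -
    have "w $ (k,l) = (\<Sum>j\<in>UNIV. \<Sum>j'\<in>UNIV. (B1$k$j * B2$l$j' - (if (k,l) = (j,j') then b else 0)) *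
           (if j = j' then x $ j else 0))"
      unfolding w_def matrix_vector_mult_def sum_pair kron_def mat_def diag_embed_def
      by (simp cong: if_cong)
    also have "\<dots> = (\<Sum>j\<in>UNIV. (B1$k$j * B2$l$j - (if (k,l) = (j,j) then b else 0)) * x$j)"
      by (intro sum.cong refl sum_delta_mult)
    also have "\<dots> = (\<Sum>j\<in>UNIV. B1$k$j * B2$l$j * x$j)"
      using kl by (intro sum.cong refl) auto
    finally show ?thesis .
  qed
  have "(diag_extract ((kron A1 A2 - mat a) *v offdiag_part w)) $ i
     = (\<Sum>k\<in>UNIV. \<Sum>l\<in>UNIV. if k = l then 0 else A1$i$k * A2$i$l * (\<Sum>j\<in>UNIV. B1$k$j * B2$l$j * x$j))"
    for i
  proof -
    have "(diag_extract ((kron A1 A2 - mat a) *v offdiag_part w)) $ i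
      = (\<Sum>k\<in>UNIV. \<Sum>l\<in>UNIV. (A1$i$k * A2$i$l - (if (i,i) = (k,l) then a else 0)) *
          (if k = l then 0 else w $ (k,l)))"
      unfolding diag_extract_def matrix_vector_mult_def sum_pair kron_def mat_def offdiag_part_def
      by (simp cong: if_cong)
    also have "\<dots> = (\<Sum>k\<in>UNIV. \<Sum>l\<in>UNIV. if k = l then 0
                         else A1$i$k * A2$i$l * (\<Sum>j\<in>UNIV. B1$k$j * B2$l$j * x$j))"
      by (intro sum.cong refl) (auto simp: w)
    finally show ?thesis .
  qed
  hence "((hadamard (A1 ** B1) (A2 ** B2) - hadamard A1 A2 ** hadamard B1 B2) *v x) $ i
      = (diag_extract ((kron A1 A2 - mat a) *v offdiag_part w)) $ i" for i
    by (simp only: hadamard_defect_mv)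
  thus ?thesis unfolding w_def by (intro iffD2[OF vec_eq_iff] allI)
qed

lemma in_ball_diam_norm_bound:
  assumes "in_ball_diam A m M"
  shows "norm ((A - mat ((M + m) / 2)) *v x) \<le> cmod (M - m) / 2 * norm x"
proof -
  have "onorm ((*v) (A - mat ((M + m) / 2))) \<le> cmod (M - m) / 2"
    using assms unfolding in_ball_diam_def opnorm_def .
  from mult_right_mono[OF this norm_ge_zero, of x]
  show ?thesis using onorm[OF matrix_vector_mul_bounded_linear] by (meson order_trans)
qed

lemma hadamard_defect_norm_bound:
  fixes A1 A2 B1 B2 :: "complex^'n^'n"
  assumes "in_ball_diam (kron A1 A2) m1 M1" and "in_ball_diam (kron B1 B2) m2 M2"
  shows "norm ((hadamard (A1 ** B1) (A2 ** B2) - hadamard A1 A2 ** hadamard B1 B2) *v x)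
           \<le> (cmod (M1 - m1) / 2 * (cmod (M2 - m2) / 2)) * norm x"
proof -
  define A' where "A' = kron A1 A2 - mat ((M1 + m1) / 2)"
  define B' where "B' = kron B1 B2 - mat ((M2 + m2) / 2)"
  define r1 where "r1 = cmod (M1 - m1) / 2"
  define r2 where "r2 = cmod (M2 - m2) / 2"
  have "norm ((hadamard (A1 ** B1) (A2 ** B2) - hadamard A1 A2 ** hadamard B1 B2) *v x)
      = norm (diag_extract (A' *v offdiag_part (B' *v diag_embed x)))"
    unfolding A'_def B'_def
    by (simp only: hadamard_defect_factorization[where a="(M1 + m1) / 2" and b="(M2 + m2) / 2"])
  also have "\<dots> \<le> r1 * norm (offdiag_part (B' *v diag_embed x))"
    using norm_diag_extract in_ball_diam_norm_bound[OF assms(1)]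
    unfolding A'_def r1_def by (rule order_trans)
  also have "\<dots> \<le> r1 * (r2 * norm (diag_embed x))"
  proof (rule mult_left_mono)
    show "norm (offdiag_part (B' *v diag_embed x)) \<le> r2 * norm (diag_embed x)"
      using norm_offdiag_part in_ball_diam_norm_bound[OF assms(2)]
      unfolding B'_def r2_def by (rule order_trans)
  qed (simp add: r1_def)
  finally show ?thesis unfolding r1_def r2_def by (simp add: norm_diag_embed)
qed

theorem mainTheorem12:
  fixes A1 A2 B1 B2 :: "complex^'n^'n" and m1 M1 m2 M2 :: complex
  assumes "in_ball_diam (kron A1 A2) m1 M1"
    and "in_ball_diam (kron B1 B2) m2 M2"
  shows "loewner_le
           (mat_abs (hadamard (A1 ** B1) (A2 ** B2) - hadamard A1 A2 ** hadamard B1 B2))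
           (mat (complex_of_real (cmod (M1 - m1) * cmod (M2 - m2) / 4)))"
proof -
  have "loewner_le
          (mat_abs (hadamard (A1 ** B1) (A2 ** B2) - hadamard A1 A2 ** hadamard B1 B2))
          (mat (of_real (cmod (M1 - m1) / 2 * (cmod (M2 - m2) / 2))))"
    using hadamard_defect_norm_bound[OF assms] by (rule mat_abs_le_of_norm_bound) simp
  thus ?thesis by simp
qed

end
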